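(* Let $1<p<\infty$. For every $q\geq p$ we have $\ell_p\subset\ell_q$ (as sets of sequences), and every rectifiable curve in $\ell_p$ is also a rectifiable curve in $\ell_q$. Moreover, there exists a curve $\Gamma\subset\ell_p$ such that $\mathcal{H}^1_{\ell_q}(\Gamma)<\infty$ for every $q>p$, but $\mathcal{H}^1_{\ell_p}(\Gamma)=\infty$.
   Context: $\ell_r$ denotes the real Banach space of sequences $x=(x_1,x_2,\dots)$ with $|x|_r=(\sum_i|x_i|^r)^{1/r}<\infty$. A curve in a metric space is the image of a continuous map $[0,1]\to$ the space; it is rectifiable if its one-dimensional Hausdorff measure is finite. $\mathcal{H}^1_{\ell_r}$ denotes the one-dimensional Hausdorff measure computed with respect to the norm $|\cdot|_r$. *)

theory Defs
  imports "HOL-Analysis.Analysis"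
begin

text \<open>Sequences are modelled as functions nat \<Rightarrow> real (indexing from 0).\<close>

definition lp :: "real \<Rightarrow> (nat \<Rightarrow> real) set" where
  "lp r = {x. summable (\<lambda>i. \<bar>x i\<bar> powr r)}"

definition lp_norm :: "real \<Rightarrow> (nat \<Rightarrow> real) \<Rightarrow> real" where
  "lp_norm r x = (\<Sum>i. \<bar>x i\<bar> powr r) powr (1 / r)"

definition lp_dist :: "real \<Rightarrow> (nat \<Rightarrow> real) \<Rightarrow> (nat \<Rightarrow> real) \<Rightarrow> real" where
  "lp_dist r x y = lp_norm r (\<lambda>i. x i - y i)"

definition lp_curve :: "real \<Rightarrow> (nat \<Rightarrow> real) set \<Rightarrow> bool" where
  "lp_curve r \<Gamma> \<longleftrightarrow> (\<exists>\<gamma> :: real \<Rightarrow> (nat \<Rightarrow> real).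
      (\<forall>t\<in>{0..1}. \<gamma> t \<in> lp r) \<and>
      (\<forall>t\<in>{0..1}. \<forall>e>0. \<exists>d>0. \<forall>s\<in>{0..1}. \<bar>s - t\<bar> < d \<longrightarrow> lp_dist r (\<gamma> s) (\<gamma> t) < e) \<and>
      \<Gamma> = \<gamma> ` {0..1})"

definition lp_diam :: "real \<Rightarrow> (nat \<Rightarrow> real) set \<Rightarrow> ennreal" where
  "lp_diam r C = (SUP xy\<in>C \<times> C. ennreal (lp_dist r (fst xy) (snd xy)))"

definition lp_H1_delta :: "real \<Rightarrow> real \<Rightarrow> (nat \<Rightarrow> real) set \<Rightarrow> ennreal" where
  "lp_H1_delta r \<delta> A = (INF C\<in>{C :: nat \<Rightarrow> (nat \<Rightarrow> real) set.
       A \<subseteq> (\<Union>i. C i) \<and> (\<forall>i. C i \<subseteq> lp r \<and> lp_diam r (C i) \<le> ennreal \<delta>)}.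
       (\<Sum>i. lp_diam r (C i)))"

definition lp_H1 :: "real \<Rightarrow> (nat \<Rightarrow> real) set \<Rightarrow> ennreal" where
  "lp_H1 r A = (SUP \<delta>\<in>{0<..}. lp_H1_delta r \<delta> A)"

definition lp_rectifiable_curve :: "real \<Rightarrow> (nat \<Rightarrow> real) set \<Rightarrow> bool" where
  "lp_rectifiable_curve r \<Gamma> \<longleftrightarrow> lp_curve r \<Gamma> \<and> lp_H1 r \<Gamma> < \<infinity>"

end

theory Submission
  imports Defs "HOL-Library.Discrete_Functions" "HOL-Real_Asymp.Real_Asymp"
begin

text \<open>Inclusion and rectifiability pass from \<open>l_p\<close> to \<open>l_q\<close> because
  \<open>lp_norm q x \<le> lp_norm p x\<close> for \<open>p \<le> q\<close>, so distances, diameters and Hausdorff contents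
  can only shrink. For the counterexample, split the coordinates into dyadic blocks of sizes
  \<open>2^k\<close> and let the curve raise the \<open>k\<close>-th block, one block after the other, to a constant
  height chosen so that this segment has \<open>l_p\<close>-length \<open>\<sim> 1/(k+1)\<close>. The \<open>l_p\<close>-lengths then
  add up to the divergent harmonic series, and since distinct blocks are \<open>l_p\<close>-far apart at
  small scales, a projection onto the arclength parameter shows that \<open>\<H>\<^sup>1\<close> is infinite.
  In \<open>l_q\<close> the same segment is shorter by the factor \<open>2 powr (-k(1/p - 1/q))\<close>, which beats
  the polynomial decay of the time \<open>\<sim> (k+1) powr -p\<close> spent on it; hence the curve is Lipschitz
  in \<open>l_q\<close> and has finite \<open>\<H>\<^sup>1\<close> there.\<close>

lemma powr_eq_mult_inverse_powr:
  fixes x :: real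
  assumes "0 < x"
  shows "x powr a = x * inverse x powr (1 - a)"
proof -
  have "x * inverse x powr (1 - a) = x * x powr (- (1 - a))"
    by (simp only: inverse_powr powr_minus)
  also have "\<dots> = x powr a"
    using assms by (simp add: powr_mult_base)
  finally show ?thesis by simp
qed

section \<open>Comparison of the \<open>l_r\<close>-norms\<close>

lemma lp_norm_nonneg: "0 \<le> lp_norm r x"
  by (simp add: lp_norm_def)

lemma lp_dist_nonneg: "0 \<le> lp_dist r x y"
  by (simp add: lp_dist_def lp_norm_nonneg)

lemma lp_dist_commute: "lp_dist r x y = lp_dist r y x"
  by (simp add: lp_dist_def lp_norm_def abs_minus_commute)

lemma lp_dist_le_lp_diam: "x \<in> C \<Longrightarrow> y \<in> C \<Longrightarrow> ennreal (lp_dist r x y) \<le> lp_diam r C"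
  unfolding lp_diam_def by (rule SUP_upper2[of "(x, y)"]) auto

lemma lp_diff_mem:
  assumes p: "0 < p" and x: "x \<in> lp p" and y: "y \<in> lp p"
  shows "(\<lambda>i. x i - y i) \<in> lp p"
proof -
  have bound: "\<bar>x i - y i\<bar> powr p \<le> 2 powr p * (\<bar>x i\<bar> powr p + \<bar>y i\<bar> powr p)" for i
  proof -
    have "\<bar>x i - y i\<bar> powr p \<le> (2 * max \<bar>x i\<bar> \<bar>y i\<bar>) powr p"
      using p by (intro powr_mono2) auto
    also have "\<dots> = 2 powr p * max \<bar>x i\<bar> \<bar>y i\<bar> powr p"
      by (simp add: powr_mult)
    also have "max \<bar>x i\<bar> \<bar>y i\<bar> powr p \<le> \<bar>x i\<bar> powr p + \<bar>y i\<bar> powr p"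
      by (cases "\<bar>x i\<bar> \<le> \<bar>y i\<bar>") (auto simp: max_def)
    finally show ?thesis by simp
  qed
  have "summable (\<lambda>i. 2 powr p * (\<bar>x i\<bar> powr p + \<bar>y i\<bar> powr p))"
    using x y by (intro summable_mult summable_add) (auto simp: lp_def)
  then have "summable (\<lambda>i. \<bar>x i - y i\<bar> powr p)"
    by (rule summable_comparison_test') (use bound in simp)
  then show ?thesis unfolding lp_def by simp
qed

lemma abs_le_lp_norm:
  assumes p: "0 < p" and x: "x \<in> lp p"
  shows "\<bar>x i\<bar> \<le> lp_norm p x"
proof -
  have "\<bar>x i\<bar> = (\<bar>x i\<bar> powr p) powr (1 / p)"
    using p by (simp add: powr_powr)
  also have "\<dots> \<le> lp_norm p x"
    unfolding lp_norm_def using x p sum_le_suminf[of "\<lambda>i. \<bar>x i\<bar> powr p" "{i}"]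
    by (intro powr_mono2) (auto simp: lp_def)
  finally show ?thesis .
qed

lemma lp_norm_powr:
  assumes p: "0 < p" and x: "x \<in> lp p"
  shows "lp_norm p x powr p = (\<Sum>i. \<bar>x i\<bar> powr p)"
  using p x by (simp add: lp_norm_def lp_def powr_powr suminf_nonneg)

text \<open>Each term is bounded by the norm \<open>N\<close>, so \<open>\<bar>x i\<bar> powr q \<le> \<bar>x i\<bar> powr p * N powr (q - p)\<close>.\<close>
lemma lp_embedding:
  assumes p: "0 < p" and pq: "p \<le> q" and x: "x \<in> lp p"
  shows "x \<in> lp q" and "lp_norm q x \<le> lp_norm p x"
proof -
  define N where "N = lp_norm p x"
  have summable_p: "summable (\<lambda>i. \<bar>x i\<bar> powr p)"
    using x by (simp add: lp_def)
  have bound: "\<bar>x i\<bar> powr q \<le> \<bar>x i\<bar> powr p * N powr (q - p)" for i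
  proof (cases "x i = 0")
    case False
    have "\<bar>x i\<bar> powr q = \<bar>x i\<bar> powr p * \<bar>x i\<bar> powr (q - p)"
      by (simp add: powr_add[symmetric])
    also have "\<dots> \<le> \<bar>x i\<bar> powr p * N powr (q - p)"
      unfolding N_def using abs_le_lp_norm[OF p x, of i] pq by (intro mult_left_mono powr_mono2) auto
    finally show ?thesis .
  qed simp
  have summable_q: "summable (\<lambda>i. \<bar>x i\<bar> powr q)"
    by (rule summable_comparison_test'[where g = "\<lambda>i. \<bar>x i\<bar> powr p * N powr (q - p)"])
       (use bound summable_p in \<open>auto intro: summable_mult2\<close>)
  then show "x \<in> lp q" by (simp add: lp_def)
  have "(\<Sum>i. \<bar>x i\<bar> powr q) \<le> (\<Sum>i. \<bar>x i\<bar> powr p * N powr (q - p))"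
    by (intro suminf_le bound summable_q summable_mult2 summable_p)
  also have "\<dots> = N powr p * N powr (q - p)"
    using lp_norm_powr[OF p x] by (simp add: N_def suminf_mult2[OF summable_p])
  also have "\<dots> = N powr q"
    by (simp add: powr_add[symmetric])
  finally have "lp_norm q x \<le> (N powr q) powr (1 / q)"
    unfolding lp_norm_def using p pq by (intro powr_mono2) (auto intro: suminf_nonneg summable_q)
  also have "\<dots> = lp_norm p x"
    using p pq by (simp add: powr_powr N_def lp_norm_nonneg)
  finally show "lp_norm q x \<le> lp_norm p x" .
qed

lemma lp_dist_antimono:
  assumes "0 < p" "p \<le> q" "x \<in> lp p" "y \<in> lp p"
  shows "lp_dist q x y \<le> lp_dist p x y"
  using lp_embedding(2)[OF assms(1,2) lp_diff_mem[OF assms(1,3,4)]] by (simp add: lp_dist_def)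

lemma lp_diam_antimono:
  assumes "0 < p" "p \<le> q" "C \<subseteq> lp p"
  shows "lp_diam q C \<le> lp_diam p C"
  unfolding lp_diam_def
  by (rule SUP_mono) (use assms lp_dist_antimono in \<open>fastforce intro: ennreal_leI\<close>)

lemma lp_H1_delta_antimono:
  assumes "0 < p" "p \<le> q"
  shows "lp_H1_delta q \<delta> A \<le> lp_H1_delta p \<delta> A"
  unfolding lp_H1_delta_def
proof (rule INF_mono)
  fix C :: "nat \<Rightarrow> (nat \<Rightarrow> real) set"
  assume C: "C \<in> {C. A \<subseteq> (\<Union>i. C i) \<and> (\<forall>i. C i \<subseteq> lp p \<and> lp_diam p (C i) \<le> ennreal \<delta>)}"
  then have diam_le: "lp_diam q (C i) \<le> lp_diam p (C i)" for i
    using lp_diam_antimono[OF assms] by blast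
  have "C i \<subseteq> lp q" for i
    using C lp_embedding(1)[OF assms] by blast
  then have "C \<in> {C. A \<subseteq> (\<Union>i. C i) \<and> (\<forall>i. C i \<subseteq> lp q \<and> lp_diam q (C i) \<le> ennreal \<delta>)}"
    using C diam_le order_trans by blast
  moreover have "(\<Sum>i. lp_diam q (C i)) \<le> (\<Sum>i. lp_diam p (C i))"
    by (intro suminf_le diam_le) auto
  ultimately show "\<exists>C'\<in>{C. A \<subseteq> (\<Union>i. C i) \<and> (\<forall>i. C i \<subseteq> lp q \<and> lp_diam q (C i) \<le> ennreal \<delta>)}.
      (\<Sum>i. lp_diam q (C' i)) \<le> (\<Sum>i. lp_diam p (C i))"
    by blast
qed

lemma lp_H1_antimono:
  assumes "0 < p" "p \<le> q"
  shows "lp_H1 q A \<le> lp_H1 p A"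
  unfolding lp_H1_def by (intro SUP_mono) (use lp_H1_delta_antimono[OF assms] in auto)

lemma lp_curve_mono:
  assumes p: "0 < p" and pq: "p \<le> q" and curve: "lp_curve p \<Gamma>"
  shows "lp_curve q \<Gamma>"
proof -
  obtain \<gamma> :: "real \<Rightarrow> nat \<Rightarrow> real" where
    mem: "\<forall>t\<in>{0..1}. \<gamma> t \<in> lp p" and
    cont: "\<forall>t\<in>{0..1}. \<forall>e>0. \<exists>d>0. \<forall>s\<in>{0..1}. \<bar>s - t\<bar> < d \<longrightarrow> lp_dist p (\<gamma> s) (\<gamma> t) < e" and
    img: "\<Gamma> = \<gamma> ` {0..1}"
    using curve unfolding lp_curve_def by blast
  have "\<forall>t\<in>{0..1}. \<gamma> t \<in> lp q"
    using mem lp_embedding(1)[OF p pq] by blast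
  moreover have "\<forall>t\<in>{0..1}. \<forall>e>0. \<exists>d>0. \<forall>s\<in>{0..1}. \<bar>s - t\<bar> < d \<longrightarrow> lp_dist q (\<gamma> s) (\<gamma> t) < e"
    using cont mem lp_dist_antimono[OF p pq] by (meson le_less_trans)
  ultimately show ?thesis
    using img unfolding lp_curve_def by blast
qed

lemma lp_rectifiable_curve_mono:
  assumes "0 < p" "p \<le> q" "lp_rectifiable_curve p \<Gamma>"
  shows "lp_rectifiable_curve q \<Gamma>"
  using assms lp_curve_mono lp_H1_antimono le_less_trans
  unfolding lp_rectifiable_curve_def by meson

section \<open>Estimates for the Hausdorff measure\<close>

lemma length_le_suminf_cover:
  fixes D :: "nat \<Rightarrow> real set" and r :: "nat \<Rightarrow> real"
  assumes cover: "{a..b} \<subseteq> (\<Union>i. D i)" and r_nonneg: "\<And>i. r i \<ge> 0"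
    and diam: "\<And>i x y. x \<in> D i \<Longrightarrow> y \<in> D i \<Longrightarrow> \<bar>x - y\<bar> \<le> r i"
  shows "ennreal (b - a) \<le> (\<Sum>i. ennreal (2 * r i))"
proof (cases "a \<le> b")
  case True
  define c where "c i = (SOME x. x \<in> D i)" for i
  define I where "I i = (if D i = {} then {} else {c i - r i .. c i + r i})" for i
  have D_sub: "D i \<subseteq> I i" for i
  proof (cases "D i = {}")
    case False
    then have "c i \<in> D i" unfolding c_def by (simp add: some_in_eq)
    then show ?thesis using diam[of _ i "c i"] False by (force simp: I_def abs_le_iff)
  qed (simp add: I_def)
  have "ennreal (b - a) = emeasure lborel {a..b}" using True by simp
  also have "\<dots> \<le> emeasure lborel (\<Union>i. I i)"
  proof (rule emeasure_mono)
    show "{a..b} \<subseteq> (\<Union>i. I i)" using cover D_sub by blast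
  qed (auto simp: I_def)
  also have "\<dots> \<le> (\<Sum>i. emeasure lborel (I i))"
    by (intro emeasure_subadditive_countably) (auto simp: I_def)
  also have "\<dots> \<le> (\<Sum>i. ennreal (2 * r i))"
    using r_nonneg by (intro suminf_le) (auto simp: I_def)
  finally show ?thesis .
qed (simp add: ennreal_neg)

lemma ennreal_divide_le_of_le_mult:
  assumes c: "0 < c" and le: "ennreal x \<le> ennreal c * S"
  shows "ennreal (x / c) \<le> S"
proof (cases "0 \<le> x")
  case True
  have "ennreal c * ennreal (x / c) = ennreal x"
    using True c by (simp add: ennreal_mult[symmetric])
  with le have "ennreal c * ennreal (x / c) \<le> ennreal c * S"
    by simp
  then show ?thesis
    using c by (subst (asm) ennreal_mult_le_mult_iff) auto
next
  case False
  then have "x / c \<le> 0" using c by (simp add: divide_nonpos_pos)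
  then show ?thesis by (simp add: ennreal_neg)
qed

lemma lp_diam_image_le:
  assumes "\<And>u v. u \<in> S \<Longrightarrow> v \<in> S \<Longrightarrow> lp_dist r (\<gamma> u) (\<gamma> v) \<le> c"
  shows "lp_diam r (\<gamma> ` S) \<le> ennreal c"
  unfolding lp_diam_def using assms by (intro SUP_least) (auto intro: ennreal_leI)

text \<open>The projection \<open>g\<close> onto the interval is given through a parametrisation \<open>F\<close> of part of
  \<open>A\<close>, so that it need not be well defined on the points themselves.\<close>
lemma lp_H1_delta_ge_interval:
  assumes onto: "{a..b} \<subseteq> g ` Z" and into: "F ` Z \<subseteq> A"
    and lipschitz: "\<And>z z'. z \<in> Z \<Longrightarrow> z' \<in> Z \<Longrightarrow> lp_dist r (F z) (F z') \<le> \<delta> \<Longrightarrow>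
                       \<bar>g z - g z'\<bar> \<le> L * lp_dist r (F z) (F z')"
    and L: "0 < L" and \<delta>: "0 \<le> \<delta>"
  shows "ennreal ((b - a) / (2 * L)) \<le> lp_H1_delta r \<delta> A"
  unfolding lp_H1_delta_def
proof (rule INF_greatest)
  fix C :: "nat \<Rightarrow> (nat \<Rightarrow> real) set"
  assume "C \<in> {C. A \<subseteq> (\<Union>i. C i) \<and> (\<forall>i. C i \<subseteq> lp r \<and> lp_diam r (C i) \<le> ennreal \<delta>)}"
  then have cover: "A \<subseteq> (\<Union>i. C i)" and diam_le: "\<And>i. lp_diam r (C i) \<le> ennreal \<delta>"
    by auto
  have diam_finite: "lp_diam r (C i) < top" for i
    using diam_le[of i] ennreal_less_top by (rule le_less_trans)
  define D where "D i = g ` {z \<in> Z. F z \<in> C i}" for i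
  have "{a..b} \<subseteq> (\<Union>i. D i)"
  proof
    fix u assume "u \<in> {a..b}"
    then obtain z where z: "z \<in> Z" "u = g z" using onto by blast
    then obtain i where "F z \<in> C i" using into cover by blast
    with z show "u \<in> (\<Union>i. D i)" unfolding D_def by blast
  qed
  moreover have "\<bar>x - y\<bar> \<le> L * enn2real (lp_diam r (C i))" if xy: "x \<in> D i" "y \<in> D i" for i x y
  proof -
    obtain z z' where z: "z \<in> Z" "F z \<in> C i" "x = g z" and z': "z' \<in> Z" "F z' \<in> C i" "y = g z'"
      using xy unfolding D_def by blast
    have dist_le: "ennreal (lp_dist r (F z) (F z')) \<le> lp_diam r (C i)"
      using z z' by (intro lp_dist_le_lp_diam)
    then have "ennreal (lp_dist r (F z) (F z')) \<le> ennreal \<delta>"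
      using diam_le[of i] by (rule order_trans)
    then have "lp_dist r (F z) (F z') \<le> \<delta>"
      using \<delta> by simp
    then have "\<bar>x - y\<bar> \<le> L * lp_dist r (F z) (F z')"
      using lipschitz z z' by simp
    also have "\<dots> \<le> L * enn2real (lp_diam r (C i))"
      using enn2real_mono[OF dist_le diam_finite] lp_dist_nonneg L by (simp add: mult_left_mono)
    finally show ?thesis .
  qed
  ultimately have "ennreal (b - a) \<le> (\<Sum>i. ennreal (2 * (L * enn2real (lp_diam r (C i)))))"
    using L by (intro length_le_suminf_cover) auto
  also have "\<dots> = (\<Sum>i. ennreal (2 * L) * lp_diam r (C i))"
  proof -
    have "ennreal (2 * (L * enn2real (lp_diam r (C i)))) = ennreal (2 * L) * lp_diam r (C i)" for i
      using L diam_finite[of i] by (subst mult.assoc[symmetric], subst ennreal_mult) auto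
    then show ?thesis by simp
  qed
  also have "\<dots> = ennreal (2 * L) * (\<Sum>i. lp_diam r (C i))"
    by simp
  finally show "ennreal ((b - a) / (2 * L)) \<le> (\<Sum>i. lp_diam r (C i))"
    using L by (intro ennreal_divide_le_of_le_mult) auto
qed

lemma lp_H1_delta_le_lp_H1: "0 < \<delta> \<Longrightarrow> lp_H1_delta r \<delta> A \<le> lp_H1 r A"
  unfolding lp_H1_def by (rule SUP_upper) simp

lemma segment_subset_unit_interval:
  fixes j n :: nat
  assumes "j < n"
  shows "{real j / n..(real j + 1) / n} \<subseteq> {0..1}"
proof -
  have "0 \<le> real j / n" "(real j + 1) / n \<le> 1"
    using assms by (auto simp: field_simps)
  then show ?thesis by (meson atLeastAtMost_iff order_trans subsetI)
qed

lemma unit_interval_in_segment: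
  fixes n :: nat
  assumes n: "0 < n" and t: "t \<in> {0..1}"
  obtains j where "j < n" "t \<in> {real j / n..(real j + 1) / n}"
proof (cases "t = 1")
  case True
  show ?thesis using n True by (intro that[of "n - 1"]) (auto simp: field_simps of_nat_diff)
next
  case False
  define j where "j = nat \<lfloor>t * n\<rfloor>"
  have tn: "0 \<le> t * n" "t * n < n" using t False n by auto
  have floor: "real j \<le> t * n" "t * n < real j + 1" using tn by (auto simp: j_def)
  have "j < n" using floor tn by linarith
  moreover have "t \<in> {real j / n..(real j + 1) / n}" using floor n by (auto simp: field_simps)
  ultimately show ?thesis by (rule that)
qed

text \<open>Cover the curve by the images of \<open>n \<ge> L / \<delta>\<close> intervals of length \<open>1 / n\<close>.\<close>
lemma lp_H1_lipschitz_image_le: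
  assumes mem: "\<And>t. t \<in> {0..1} \<Longrightarrow> \<gamma> t \<in> lp r"
    and lipschitz: "\<And>s t. s \<in> {0..1} \<Longrightarrow> t \<in> {0..1} \<Longrightarrow> lp_dist r (\<gamma> s) (\<gamma> t) \<le> L * \<bar>s - t\<bar>"
  shows "lp_H1 r (\<gamma> ` {0..1}) \<le> ennreal L"
  unfolding lp_H1_def
proof (rule SUP_least)
  fix \<delta> :: real assume "\<delta> \<in> {0<..}"
  then have \<delta>: "\<delta> > 0" by simp
  have L: "0 \<le> L"
    using lipschitz[of 0 1] lp_dist_nonneg[of r "\<gamma> 0" "\<gamma> 1"] by simp
  define n where "n = nat \<lceil>L / \<delta>\<rceil> + 1"
  have n: "0 < n" by (simp add: n_def)
  have "L / \<delta> \<le> real n" unfolding n_def by linarith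
  then have L_n: "L / n \<le> \<delta>" using \<delta> n by (simp add: field_simps)
  define C where "C j = (if j < n then \<gamma> ` {real j / n..(real j + 1) / n} else {})" for j
  have diam_C: "lp_diam r (C j) \<le> ennreal (L / n)" for j
  proof (cases "j < n")
    case True
    have "lp_dist r (\<gamma> u) (\<gamma> v) \<le> L / n"
      if uv: "u \<in> {real j / n..(real j + 1) / n}" "v \<in> {real j / n..(real j + 1) / n}" for u v
    proof -
      have "lp_dist r (\<gamma> u) (\<gamma> v) \<le> L * \<bar>u - v\<bar>"
        using uv segment_subset_unit_interval[OF True] by (intro lipschitz) blast+
      also have "\<dots> \<le> L * (1 / n)"
      proof (intro mult_left_mono L)
        have "(real j + 1) / n - real j / n = 1 / n" using n by (simp add: field_simps)
        then show "\<bar>u - v\<bar> \<le> 1 / n" using uv unfolding atLeastAtMost_iff by linarith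
      qed
      finally show ?thesis by simp
    qed
    then have "lp_diam r (\<gamma> ` {real j / n..(real j + 1) / n}) \<le> ennreal (L / n)"
      by (rule lp_diam_image_le)
    then show ?thesis
      using True by (simp add: C_def)
  qed (simp add: C_def lp_diam_def)
  have "\<gamma> ` {0..1} \<subseteq> (\<Union>j. C j)"
  proof
    fix x assume "x \<in> \<gamma> ` {0..1}"
    then obtain t where t: "t \<in> {0..1}" "x = \<gamma> t" by blast
    obtain j where "j < n" "t \<in> {real j / n..(real j + 1) / n}"
      using unit_interval_in_segment[OF n t(1)] .
    then show "x \<in> (\<Union>j. C j)" using t by (auto simp: C_def)
  qed
  moreover have "C j \<subseteq> lp r" for j
  proof -
    have "C j \<subseteq> \<gamma> ` {0..1}"
      using segment_subset_unit_interval[of j n] by (simp add: C_def image_mono)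
    then show ?thesis using mem by blast
  qed
  moreover have "lp_diam r (C j) \<le> ennreal \<delta>" for j
    using diam_C[of j] ennreal_leI[OF L_n] by (rule order_trans)
  ultimately have "lp_H1_delta r \<delta> (\<gamma> ` {0..1}) \<le> (\<Sum>j. lp_diam r (C j))"
    unfolding lp_H1_delta_def by (intro INF_lower) blast
  also have "\<dots> = (\<Sum>j<n. lp_diam r (C j))"
    by (rule suminf_finite) (auto simp: C_def lp_diam_def bot_ennreal)
  also have "\<dots> \<le> (\<Sum>j<n. ennreal (L / n))"
    by (intro sum_mono diam_C)
  also have "\<dots> = ennreal (\<Sum>j<n. L / n)"
    using L by (intro sum_ennreal) simp
  also have "(\<Sum>j<n. L / n) = L"
    using n by simp
  finally show "lp_H1_delta r \<delta> (\<gamma> ` {0..1}) \<le> ennreal L" .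
qed

lemma lp_curve_holder_image:
  assumes mem: "\<And>t. t \<in> {0..1} \<Longrightarrow> \<gamma> t \<in> lp r" and \<alpha>: "0 < \<alpha>"
    and holder: "\<And>s t. s \<in> {0..1} \<Longrightarrow> t \<in> {0..1} \<Longrightarrow> lp_dist r (\<gamma> s) (\<gamma> t) \<le> \<bar>s - t\<bar> powr \<alpha>"
  shows "lp_curve r (\<gamma> ` {0..1})"
  unfolding lp_curve_def
proof (intro exI[of _ \<gamma>] conjI ballI allI impI)
  fix t e :: real assume t: "t \<in> {0..1}" and e: "e > 0"
  show "\<exists>d>0. \<forall>s\<in>{0..1}. \<bar>s - t\<bar> < d \<longrightarrow> lp_dist r (\<gamma> s) (\<gamma> t) < e"
  proof (intro exI[of _ "e powr (1 / \<alpha>)"] conjI ballI impI)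
    fix s assume s: "s \<in> {0..1}" and st: "\<bar>s - t\<bar> < e powr (1 / \<alpha>)"
    have "lp_dist r (\<gamma> s) (\<gamma> t) \<le> \<bar>s - t\<bar> powr \<alpha>" using holder s t .
    also have "\<dots> < (e powr (1 / \<alpha>)) powr \<alpha>" using st \<alpha> by (intro powr_less_mono2) auto
    also have "\<dots> = e" using e \<alpha> by (simp add: powr_powr)
    finally show "lp_dist r (\<gamma> s) (\<gamma> t) < e" .
  qed (use e in simp)
qed (use mem in auto)

section \<open>Dyadic blocks\<close>

text \<open>Coordinate \<open>i\<close> lies in the \<open>k\<close>-th dyadic block, \<open>2^k \<le> i + 1 < 2^(k+1)\<close>, iff
  \<open>floor_log (Suc i) = k\<close>; the \<open>k\<close>-th block has \<open>2^k\<close> coordinates.\<close>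
lemma sum_dyadic_blocks:
  fixes c :: "nat \<Rightarrow> real"
  shows "(\<Sum>i<2^K - 1. c (floor_log (Suc i))) = (\<Sum>k<K. 2^k * c k)"
proof (induction K)
  case (Suc K)
  have "(2::nat)^Suc K - 1 = (2^K - 1) + 2^K"
    using one_le_power[of 2 K] by simp
  then have "(\<Sum>i<2^Suc K - 1. c (floor_log (Suc i))) =
      (\<Sum>i<2^K - 1. c (floor_log (Suc i))) + (\<Sum>i\<in>{2^K - 1..<(2^K - 1) + 2^K}. c (floor_log (Suc i)))"
    by (simp add: sum.atLeastLessThan_concat[symmetric] atLeast0LessThan[symmetric])
  also have "(\<Sum>i\<in>{2^K - 1..<(2^K - 1) + 2^K}. c (floor_log (Suc i))) = (\<Sum>i\<in>{(2::nat)^K - 1..<(2^K - 1) + 2^K}. c K)"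
    using one_le_power[of 2 K] by (intro sum.cong refl arg_cong[where f=c] floor_log_eqI) auto
  finally show ?case using Suc by simp
qed simp

lemma sums_dyadic_blocks:
  fixes c :: "nat \<Rightarrow> real"
  assumes nonneg: "\<And>k. c k \<ge> 0" and summable: "summable (\<lambda>k. 2^k * c k)"
  shows "(\<lambda>i. c (floor_log (Suc i))) sums (\<Sum>k. 2^k * c k)"
proof -
  define f where "f i = c (floor_log (Suc i))" for i
  have bounded: "(\<Sum>i<n. f i) \<le> (\<Sum>k. 2^k * c k)" for n
  proof -
    have "n \<le> 2^n - 1" using less_exp[of n] by linarith
    then have "(\<Sum>i<n. f i) \<le> (\<Sum>i<2^n - 1. f i)"
      by (intro sum_mono2) (auto simp: f_def nonneg)
    also have "\<dots> = (\<Sum>k<n. 2^k * c k)" unfolding f_def by (rule sum_dyadic_blocks)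
    also have "\<dots> \<le> (\<Sum>k. 2^k * c k)" by (intro sum_le_suminf summable) (auto simp: nonneg)
    finally show ?thesis .
  qed
  have "summable f" by (rule summableI_nonneg_bounded[OF _ bounded]) (simp add: f_def nonneg)
  moreover have "strict_mono (\<lambda>K::nat. (2::nat)^K - 1)"
    by (rule strict_monoI_Suc) (simp add: less_diff_conv)
  ultimately have "(\<lambda>K. \<Sum>i<2^K - 1. f i) \<longlonglongrightarrow> suminf f"
    using LIMSEQ_subseq_LIMSEQ[OF summable_LIMSEQ] by (auto simp: o_def)
  moreover have "(\<lambda>K. \<Sum>i<2^K - 1. f i) \<longlonglongrightarrow> (\<Sum>k. 2^k * c k)"
    unfolding f_def sum_dyadic_blocks by (rule summable_LIMSEQ[OF summable])
  ultimately have "suminf f = (\<Sum>k. 2^k * c k)" by (rule LIMSEQ_unique)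
  with \<open>summable f\<close> show ?thesis unfolding f_def by (metis summable_sums)
qed

section \<open>The curve\<close>

text \<open>\<open>weight k\<close> is both the time the curve spends raising the \<open>k\<close>-th block and the
  \<open>p\<close>-th power of the \<open>l_p\<close>-length of that segment.\<close>
locale dyadic_curve =
  fixes p :: real
  assumes one_less_p: "1 < p"
begin

definition zeta_sum :: real where
  "zeta_sum = (\<Sum>j. real (Suc j) powr (- p))"

definition weight :: "nat \<Rightarrow> real" where
  "weight k = real (Suc k) powr (- p) / zeta_sum"

definition node :: "nat \<Rightarrow> real" where
  "node K = (\<Sum>k<K. weight k)"

definition progress :: "nat \<Rightarrow> real \<Rightarrow> real" where
  "progress k t = min t (node (Suc k)) - min t (node k)"

definition fill :: "nat \<Rightarrow> real \<Rightarrow> real" where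
  "fill k t = progress k t / weight k"

definition height :: "nat \<Rightarrow> real" where
  "height k = (weight k / 2^k) powr (1 / p)"

definition block_vec :: "(nat \<Rightarrow> real) \<Rightarrow> nat \<Rightarrow> real" where
  "block_vec d i = height (floor_log (Suc i)) * d (floor_log (Suc i))"

definition curve :: "real \<Rightarrow> nat \<Rightarrow> real" where
  "curve t = block_vec (\<lambda>k. fill k t)"

definition block_mass :: "real \<Rightarrow> nat \<Rightarrow> real" where
  "block_mass r k = 2^k * height k powr r"

definition block_length :: "nat \<Rightarrow> real" where
  "block_length k = weight k powr (1 / p)"

lemma summable_zeta: "summable (\<lambda>j. real (Suc j) powr (- p))"
  using one_less_p summable_Suc_iff[of "\<lambda>n. real n powr (- p)"]
  by (simp add: summable_real_powr_iff)

lemma zeta_sum_pos: "0 < zeta_sum"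
  unfolding zeta_sum_def by (intro suminf_pos summable_zeta) simp

lemma weight_pos: "0 < weight k"
  using zeta_sum_pos by (simp add: weight_def)

lemma weight_sums: "weight sums 1"
  using sums_divide[OF summable_sums[OF summable_zeta], of zeta_sum] zeta_sum_pos
  by (simp add: weight_def[abs_def] zeta_sum_def)

lemma summable_weight: "summable weight"
  using weight_sums by (simp add: sums_iff)

lemma weight_le_1: "weight k \<le> 1"
  using sum_le_suminf[OF summable_weight, of "{k}"] weight_pos weight_sums
  by (auto simp: sums_iff less_imp_le)

lemma node_0 [simp]: "node 0 = 0"
  by (simp add: node_def)

lemma node_Suc: "node (Suc k) = node k + weight k"
  by (simp add: node_def)

lemma node_mono: "j \<le> k \<Longrightarrow> node j \<le> node k"
  unfolding node_def by (intro sum_mono2) (auto simp: weight_pos less_imp_le)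

lemma node_nonneg: "0 \<le> node k"
  using node_mono[of 0 k] by simp

lemma node_le_1: "node k \<le> 1"
  using sum_le_suminf[OF summable_weight, of "{..<k}"] weight_pos weight_sums
  by (auto simp: sums_iff less_imp_le node_def)

lemma node_tendsto: "node \<longlonglongrightarrow> 1"
  using weight_sums by (simp add: sums_def node_def[abs_def])

lemma progress_nonneg: "0 \<le> progress k t"
  and progress_le_weight: "progress k t \<le> weight k"
  using node_mono[of k "Suc k"] by (auto simp: progress_def min_def node_Suc)

lemma progress_mono: "s \<le> t \<Longrightarrow> progress k s \<le> progress k t"
  using node_mono[of k "Suc k"] by (auto simp: progress_def min_def)

lemma sums_progress_diff:
  assumes "0 \<le> s" "s \<le> t" "t \<le> 1"
  shows "(\<lambda>k. progress k t - progress k s) sums (t - s)"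
proof -
  have "(\<Sum>k<K. progress k t - progress k s) = min t (node K) - min s (node K)" for K
    using assms sum_lessThan_telescope[of "\<lambda>k. min t (node k) - min s (node k)" K]
    by (simp add: progress_def algebra_simps)
  moreover have "(\<lambda>K. min t (node K) - min s (node K)) \<longlonglongrightarrow> min t 1 - min s 1"
    by (intro tendsto_intros node_tendsto)
  ultimately show ?thesis
    using assms by (simp add: sums_def)
qed

lemma sums_abs_progress_diff:
  assumes "s \<in> {0..1}" "t \<in> {0..1}"
  shows "(\<lambda>k. \<bar>progress k s - progress k t\<bar>) sums \<bar>s - t\<bar>"
proof (cases "s \<le> t")
  case True
  then show ?thesis
    using sums_progress_diff[of s t] assms progress_mono[of s t] by (simp add: abs_minus_commute)
next
  case False
  then show ?thesis
    using sums_progress_diff[of t s] assms progress_mono[of t s] by simp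
qed

lemma fill_nonneg: "0 \<le> fill k t"
  and fill_le_1: "fill k t \<le> 1"
  using progress_nonneg[of k t] progress_le_weight[of k t] weight_pos[of k]
  by (auto simp: fill_def field_simps)

lemma weight_mult_abs_fill_diff:
  "weight k * \<bar>fill k s - fill k t\<bar> = \<bar>progress k s - progress k t\<bar>"
  using weight_pos[of k] by (simp add: fill_def diff_divide_distrib[symmetric] abs_divide)

lemma block_mass_p: "block_mass p k = weight k"
  using one_less_p weight_pos[of k] by (simp add: block_mass_def height_def powr_powr)

lemma block_mass_nonneg: "0 \<le> block_mass r k"
  by (simp add: block_mass_def)

lemma block_mass_le_weight:
  assumes "p \<le> r"
  shows "block_mass r k \<le> weight k"
proof -
  have ratio: "0 \<le> weight k / 2^k" "weight k / 2^k \<le> 1"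
    using weight_pos[of k] weight_le_1[of k] by (auto simp: field_simps order_trans[OF _ one_le_power])
  have "height k powr r = (weight k / 2^k) powr (r / p)"
    by (simp add: height_def powr_powr)
  also have "\<dots> \<le> (weight k / 2^k) powr 1"
    using assms one_less_p ratio by (intro powr_mono') auto
  finally show ?thesis
    using ratio by (simp add: block_mass_def field_simps)
qed

lemma block_mass_root:
  assumes "0 < r"
  shows "block_mass r k powr (1 / r) = block_length k * 2 powr (- (1 / p - 1 / r) * k)"
proof -
  have "block_mass r k powr (1 / r) = (2 powr k) powr (1 / r) * (weight k / 2 powr k) powr (1 / p)"
    using assms one_less_p weight_pos[of k]
    by (simp add: block_mass_def height_def powr_mult powr_powr powr_realpow)
  also have "\<dots> = block_length k * 2 powr (- (1 / p - 1 / r) * k)"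
    using assms one_less_p weight_pos[of k]
    by (simp add: block_length_def powr_divide powr_powr powr_add[symmetric] powr_diff field_simps)
  finally show ?thesis .
qed

lemma block_vec_lp:
  assumes r: "p \<le> r" and d: "\<And>k. \<bar>d k\<bar> \<le> 1"
  shows "summable (\<lambda>k. block_mass r k * \<bar>d k\<bar> powr r)"
    and "block_vec d \<in> lp r"
    and "lp_norm r (block_vec d) = (\<Sum>k. block_mass r k * \<bar>d k\<bar> powr r) powr (1 / r)"
proof -
  have le_weight: "block_mass r k * \<bar>d k\<bar> powr r \<le> weight k" for k
  proof -
    have "\<bar>d k\<bar> powr r \<le> 1"
      using powr_mono2[of r "\<bar>d k\<bar>" 1] d[of k] r one_less_p by simp
    then have "block_mass r k * \<bar>d k\<bar> powr r \<le> block_mass r k"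
      using block_mass_nonneg by (simp add: mult_left_le)
    then show ?thesis using block_mass_le_weight[OF r, of k] by (rule order_trans)
  qed
  show summable: "summable (\<lambda>k. block_mass r k * \<bar>d k\<bar> powr r)"
    by (rule summable_comparison_test'[OF summable_weight]) (use le_weight block_mass_nonneg in auto)
  define c where "c k = height k powr r * \<bar>d k\<bar> powr r" for k
  have "(\<lambda>i. c (floor_log (Suc i))) sums (\<Sum>k. 2^k * c k)"
    using summable by (intro sums_dyadic_blocks) (auto simp: c_def block_mass_def mult.assoc)
  moreover have "c (floor_log (Suc i)) = \<bar>block_vec d i\<bar> powr r" for i
    by (simp add: c_def block_vec_def abs_mult powr_mult height_def)
  ultimately have "(\<lambda>i. \<bar>block_vec d i\<bar> powr r) sums (\<Sum>k. block_mass r k * \<bar>d k\<bar> powr r)"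
    by (simp add: c_def block_mass_def mult.assoc)
  then show "block_vec d \<in> lp r"
    and "lp_norm r (block_vec d) = (\<Sum>k. block_mass r k * \<bar>d k\<bar> powr r) powr (1 / r)"
    by (auto simp: lp_def lp_norm_def sums_iff)
qed

lemma lp_dist_block_vec:
  "lp_dist r (block_vec d) (block_vec e) = lp_norm r (block_vec (\<lambda>k. d k - e k))"
  unfolding lp_dist_def
  by (rule arg_cong[where f = "lp_norm r"]) (simp add: fun_eq_iff block_vec_def algebra_simps)

lemma abs_fill_diff_le_1: "\<bar>fill k s - fill k t\<bar> \<le> 1"
  using fill_nonneg[of k s] fill_le_1[of k s] fill_nonneg[of k t] fill_le_1[of k t] by auto

lemma curve_in_lp: "p \<le> r \<Longrightarrow> curve t \<in> lp r"
  unfolding curve_def by (rule block_vec_lp(2)) (use fill_nonneg fill_le_1 in auto)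

lemma lp_dist_curve_holder:
  assumes st: "s \<in> {0..1}" "t \<in> {0..1}"
  shows "lp_dist p (curve s) (curve t) \<le> \<bar>s - t\<bar> powr (1 / p)"
proof -
  define d where "d k = fill k s - fill k t" for k
  have d: "\<bar>d k\<bar> \<le> 1" for k
    unfolding d_def by (rule abs_fill_diff_le_1)
  have term_le: "weight k * \<bar>d k\<bar> powr p \<le> \<bar>progress k s - progress k t\<bar>" for k
  proof -
    have "\<bar>d k\<bar> powr p \<le> \<bar>d k\<bar> powr 1"
      using d[of k] one_less_p by (intro powr_mono') auto
    then have "weight k * \<bar>d k\<bar> powr p \<le> weight k * \<bar>d k\<bar>"
      using weight_pos[of k] by (intro mult_left_mono) auto
    then show ?thesis
      by (simp add: d_def weight_mult_abs_fill_diff)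
  qed
  have "(\<Sum>k. weight k * \<bar>d k\<bar> powr p) \<le> (\<Sum>k. \<bar>progress k s - progress k t\<bar>)"
    using block_vec_lp(1)[OF order_refl d] sums_abs_progress_diff[OF st] term_le
    by (intro suminf_le) (auto simp: block_mass_p sums_iff)
  also have "\<dots> = \<bar>s - t\<bar>"
    using sums_abs_progress_diff[OF st] by (simp add: sums_iff)
  finally have sum_le: "(\<Sum>k. weight k * \<bar>d k\<bar> powr p) \<le> \<bar>s - t\<bar>" .
  have "lp_dist p (curve s) (curve t) = (\<Sum>k. weight k * \<bar>d k\<bar> powr p) powr (1 / p)"
    using block_vec_lp(3)[OF order_refl d]
    by (simp add: curve_def d_def lp_dist_block_vec block_mass_p)
  also have "\<dots> \<le> \<bar>s - t\<bar> powr (1 / p)"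
    using sum_le one_less_p block_vec_lp(1)[OF order_refl d] weight_pos
    by (intro powr_mono2) (auto intro!: suminf_nonneg simp: block_mass_p less_imp_le)
  finally show ?thesis .
qed

lemma lp_curve_image_curve: "lp_curve p (curve ` {0..1})"
  by (rule lp_curve_holder_image[where \<alpha> = "1 / p"])
     (use one_less_p curve_in_lp lp_dist_curve_holder in auto)

end

section \<open>Infinite length in \<open>l_p\<close>\<close>

definition profile :: "nat \<Rightarrow> real \<Rightarrow> nat \<Rightarrow> real" where
  "profile K s k = (if k < K then 1 else if k = K then s else 0)"

context dyadic_curve
begin

definition arclength :: "nat \<Rightarrow> real \<Rightarrow> real" where
  "arclength K s = (\<Sum>k<K. block_length k) + s * block_length K"

lemma fill_at_node:
  assumes s: "s \<in> {0..1}"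
  shows "fill k (node K + s * weight K) = profile K s k"
proof -
  define t where "t = node K + s * weight K"
  have t: "node K \<le> t" "t \<le> node (Suc K)"
    using s weight_pos[of K] by (auto simp: t_def node_Suc mult_left_le_one_le)
  consider "k < K" | "k = K" | "K < k" by linarith
  then show ?thesis
  proof cases
    case 1
    then have "node (Suc k) \<le> node K" by (intro node_mono) simp
    then have "progress k t = weight k"
      using t node_mono[of k "Suc k"] by (simp add: progress_def node_Suc min_def)
    then show ?thesis using 1 weight_pos[of k] by (simp add: t_def[symmetric] fill_def profile_def)
  next
    case 2
    then have "progress k t = s * weight K"
      using t by (simp add: progress_def min_def t_def)
    then show ?thesis using 2 weight_pos[of K] by (simp add: t_def[symmetric] fill_def profile_def)
  next
    case 3
    then have "node (Suc K) \<le> node k" by (intro node_mono) simp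
    then have "progress k t = 0"
      using t node_mono[of k "Suc k"] by (simp add: progress_def min_def)
    then show ?thesis using 3 by (simp add: t_def[symmetric] fill_def profile_def)
  qed
qed

lemma block_vec_profile_mem:
  assumes s: "s \<in> {0..1}"
  shows "block_vec (profile K s) \<in> curve ` {0..1}"
proof -
  have "0 \<le> node K + s * weight K"
    using s node_nonneg[of K] weight_pos[of K] by simp
  moreover have "node K + s * weight K \<le> node (Suc K)"
    using s weight_pos[of K] by (simp add: node_Suc mult_left_le_one_le)
  ultimately have "node K + s * weight K \<in> {0..1}"
    using node_le_1[of "Suc K"] by simp
  moreover have "curve (node K + s * weight K) = block_vec (profile K s)"
    using s by (simp add: curve_def fill_at_node)
  ultimately show ?thesis by (metis image_eqI)
qed

lemma block_length_eq: "block_length k = 1 / (real (Suc k) * zeta_sum powr (1 / p))"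
proof -
  have "block_length k = (real (Suc k) powr (- p)) powr (1 / p) / zeta_sum powr (1 / p)"
    by (simp add: block_length_def weight_def powr_divide)
  also have "(real (Suc k) powr (- p)) powr (1 / p) = real (Suc k) powr (- 1)"
    unfolding powr_powr using one_less_p by simp
  also have "real (Suc k) powr (- 1) = 1 / real (Suc k)"
    by (simp add: powr_minus divide_inverse)
  finally show ?thesis by simp
qed

lemma block_length_pos: "0 < block_length k"
  using zeta_sum_pos by (simp add: block_length_eq)

lemma block_length_antimono: "j \<le> k \<Longrightarrow> block_length k \<le> block_length j"
  using zeta_sum_pos by (simp add: block_length_eq frac_le mult_right_mono)

lemma block_length_mult_le_lp_norm:
  assumes d: "\<And>k. \<bar>d k\<bar> \<le> 1"
  shows "block_length k * \<bar>d k\<bar> \<le> lp_norm p (block_vec d)"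
proof -
  have "block_length k * \<bar>d k\<bar> = (weight k * \<bar>d k\<bar> powr p) powr (1 / p)"
    using one_less_p by (simp add: block_length_def powr_mult powr_powr)
  also have "\<dots> \<le> (\<Sum>k. weight k * \<bar>d k\<bar> powr p) powr (1 / p)"
    using block_vec_lp(1)[OF order_refl d] one_less_p weight_pos
      sum_le_suminf[of "\<lambda>k. weight k * \<bar>d k\<bar> powr p" "{k}"]
    by (intro powr_mono2) (auto simp: block_mass_p less_imp_le)
  also have "\<dots> = lp_norm p (block_vec d)"
    using block_vec_lp(3)[OF order_refl d] by (simp add: block_mass_p)
  finally show ?thesis .
qed

text \<open>Two points of the curve at \<open>l_p\<close>-distance below \<open>block_length N\<close> differ in at most two
  adjacent blocks, so their arclength parameters differ by at most twice their distance.\<close>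
lemma arclength_diff_le_ordered:
  assumes KK': "K \<le> K'" "K' \<le> N" and s: "s \<in> {0..1}" and s': "s' \<in> {0..1}"
    and close: "lp_dist p (block_vec (profile K s)) (block_vec (profile K' s')) < block_length N"
  shows "\<bar>arclength K s - arclength K' s'\<bar> \<le>
    2 * lp_dist p (block_vec (profile K s)) (block_vec (profile K' s'))"
proof -
  define D where "D = lp_dist p (block_vec (profile K s)) (block_vec (profile K' s'))"
  define d where "d k = profile K s k - profile K' s' k" for k
  have "\<bar>d k\<bar> \<le> 1" for k
    using s s' by (auto simp: d_def profile_def)
  then have lower: "block_length k * \<bar>d k\<bar> \<le> D" for k
    unfolding D_def d_def lp_dist_block_vec by (rule block_length_mult_le_lp_norm)
  have "0 \<le> D"
    unfolding D_def by (rule lp_dist_nonneg)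
  consider "K' = K" | "K' = Suc K" | "Suc K < K'" using KK' by linarith
  then have "\<bar>arclength K s - arclength K' s'\<bar> \<le> 2 * D"
  proof cases
    case 1
    then have "\<bar>arclength K s - arclength K' s'\<bar> = block_length K * \<bar>d K\<bar>"
      using block_length_pos[of K]
      by (simp add: arclength_def d_def profile_def abs_mult left_diff_distrib[symmetric])
    then show ?thesis using lower[of K] \<open>0 \<le> D\<close> by simp
  next
    case 2
    have "d K = s - 1" "d (Suc K) = - s'"
      using 2 by (auto simp: d_def profile_def)
    then have "block_length K * (1 - s) \<le> D" "block_length (Suc K) * s' \<le> D"
      using lower[of K] lower[of "Suc K"] s s' by auto
    moreover have "0 \<le> block_length K * (1 - s)" "0 \<le> block_length (Suc K) * s'"
      using s s' block_length_pos[of K] block_length_pos[of "Suc K"] by auto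
    moreover have "arclength K s - arclength K' s' = - (block_length K * (1 - s) + block_length (Suc K) * s')"
      using 2 by (simp add: arclength_def algebra_simps)
    ultimately show ?thesis by linarith
  next
    case 3
    then have "d (Suc K) = - 1"
      by (simp add: d_def profile_def)
    then have "block_length (Suc K) \<le> D"
      using lower[of "Suc K"] by simp
    moreover have "block_length N \<le> block_length (Suc K)"
      using 3 KK' by (intro block_length_antimono) simp
    ultimately show ?thesis using close unfolding D_def by simp
  qed
  then show ?thesis by (simp add: D_def)
qed

lemma arclength_diff_le:
  assumes "K \<le> N" "K' \<le> N" "s \<in> {0..1}" "s' \<in> {0..1}"
    and "lp_dist p (block_vec (profile K s)) (block_vec (profile K' s')) < block_length N"
  shows "\<bar>arclength K s - arclength K' s'\<bar> \<le>
    2 * lp_dist p (block_vec (profile K s)) (block_vec (profile K' s'))"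
proof (cases "K \<le> K'")
  case True
  then show ?thesis using arclength_diff_le_ordered assms by blast
next
  case False
  then show ?thesis
    using arclength_diff_le_ordered[of K' K N s' s] assms
    by (simp add: lp_dist_commute abs_minus_commute)
qed

lemma interval_subset_arclength:
  "{0..(\<Sum>k<N. block_length k)} \<subseteq> (\<lambda>(K, s). arclength K s) ` {(K, s). K \<le> N \<and> s \<in> {0..1}}"
proof (induction N)
  case 0
  have "arclength 0 0 = 0" by (simp add: arclength_def)
  then show ?case by (force intro: image_eqI[where x = "(0, 0)"])
next
  case (Suc N)
  show ?case
  proof
    fix u assume u: "u \<in> {0..(\<Sum>k<Suc N. block_length k)}"
    show "u \<in> (\<lambda>(K, s). arclength K s) ` {(K, s). K \<le> Suc N \<and> s \<in> {0..1}}"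
    proof (cases "u \<le> (\<Sum>k<N. block_length k)")
      case True
      then show ?thesis using Suc.IH u by fastforce
    next
      case False
      define s where "s = (u - (\<Sum>k<N. block_length k)) / block_length N"
      have "s \<in> {0..1}" "u = arclength N s"
        using False u block_length_pos[of N] by (auto simp: s_def arclength_def field_simps)
      then show ?thesis by force
    qed
  qed
qed

lemma lp_H1_curve_ge: "ennreal ((\<Sum>k<N. block_length k) / 4) \<le> lp_H1 p (curve ` {0..1})"
proof -
  define \<delta> where "\<delta> = block_length N / 2"
  have "\<delta> > 0" using block_length_pos[of N] by (simp add: \<delta>_def)
  have "ennreal (((\<Sum>k<N. block_length k) - 0) / (2 * 2)) \<le> lp_H1_delta p \<delta> (curve ` {0..1})"
  proof (rule lp_H1_delta_ge_interval[where g = "\<lambda>(K, s). arclength K s"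
        and F = "\<lambda>(K, s). block_vec (profile K s)" and Z = "{(K, s). K \<le> N \<and> s \<in> {0..1}}"])
    show "{0..(\<Sum>k<N. block_length k)} \<subseteq> (\<lambda>(K, s). arclength K s) ` {(K, s). K \<le> N \<and> s \<in> {0..1}}"
      by (rule interval_subset_arclength)
    show "(\<lambda>(K, s). block_vec (profile K s)) ` {(K, s). K \<le> N \<and> s \<in> {0..1}} \<subseteq> curve ` {0..1}"
      using block_vec_profile_mem by auto
    fix z z' assume z: "z \<in> {(K, s). K \<le> N \<and> s \<in> {0..1}}" "z' \<in> {(K, s). K \<le> N \<and> s \<in> {0..1}}"
      and close: "lp_dist p ((\<lambda>(K, s). block_vec (profile K s)) z) ((\<lambda>(K, s). block_vec (profile K s)) z') \<le> \<delta>"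
    obtain K s K' s' where "z = (K, s)" "z' = (K', s')" by fastforce
    with z close \<open>\<delta> > 0\<close> show "\<bar>(\<lambda>(K, s). arclength K s) z - (\<lambda>(K, s). arclength K s) z'\<bar> \<le>
        2 * lp_dist p ((\<lambda>(K, s). block_vec (profile K s)) z) ((\<lambda>(K, s). block_vec (profile K s)) z')"
      by (auto simp: \<delta>_def intro!: arclength_diff_le)
  qed (use \<open>\<delta> > 0\<close> in auto)
  also have "\<dots> \<le> lp_H1 p (curve ` {0..1})"
    using \<open>\<delta> > 0\<close> by (rule lp_H1_delta_le_lp_H1)
  finally show ?thesis by simp
qed

lemma lp_H1_curve_infinite: "lp_H1 p (curve ` {0..1}) = \<infinity>"
proof (rule ccontr)
  assume "lp_H1 p (curve ` {0..1}) \<noteq> \<infinity>"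
  then obtain x where x: "lp_H1 p (curve ` {0..1}) = ennreal x" "0 \<le> x"
    by (cases "lp_H1 p (curve ` {0..1})") auto
  have "(\<Sum>k<N. block_length k) \<le> 4 * x" for N
    using lp_H1_curve_ge[of N] x by simp
  then have "summable block_length"
    by (intro summableI_nonneg_bounded) (use block_length_pos in \<open>auto intro: less_imp_le\<close>)
  then have "summable (\<lambda>k. zeta_sum powr (1 / p) * block_length k)"
    by (rule summable_mult)
  moreover have "zeta_sum powr (1 / p) * block_length k = inverse (real (Suc k))" for k
    using zeta_sum_pos by (simp add: block_length_eq divide_simps)
  ultimately have "summable (\<lambda>k. inverse (real (Suc k)))"
    by simp
  then show False
    using not_summable_harmonic[where 'a = real] summable_Suc_iff[of "\<lambda>n. inverse (real n)"] by simp
qed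

section \<open>Finite length in \<open>l_q\<close>\<close>

text \<open>Polynomial decay of the weights loses against the exponential gain \<open>2 powr (-k(1/p - 1/q))\<close>.\<close>
lemma block_mass_root_le_weight:
  assumes "p < q"
  obtains L where "\<And>k. block_mass q k powr (1 / q) \<le> L * weight k"
proof -
  define c where "c = 1 / p - 1 / q"
  have "0 < c" using assms one_less_p by (simp add: c_def frac_less2)
  then have "(\<lambda>k. (zeta_sum * real (Suc k) powr p) powr (1 - 1 / p) * 2 powr (- c * real k)) \<longlonglongrightarrow> 0"
    using one_less_p zeta_sum_pos by real_asymp
  then have "Bseq (\<lambda>k. (zeta_sum * real (Suc k) powr p) powr (1 - 1 / p) * 2 powr (- c * real k))"
    by (intro convergent_imp_Bseq convergentI)
  then obtain L where L:
    "\<forall>k. norm ((zeta_sum * real (Suc k) powr p) powr (1 - 1 / p) * 2 powr (- c * real k)) \<le> L"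
    unfolding Bseq_def by blast
  have "block_mass q k powr (1 / q) \<le> L * weight k" for k
  proof -
    have inverse_weight: "inverse (weight k) = zeta_sum * real (Suc k) powr p"
      by (simp add: weight_def powr_minus divide_inverse)
    have "block_mass q k powr (1 / q) = weight k powr (1 / p) * 2 powr (- c * k)"
      using assms one_less_p by (simp add: block_mass_root block_length_def c_def)
    also have "weight k powr (1 / p) = weight k * inverse (weight k) powr (1 - 1 / p)"
      using weight_pos[of k] by (rule powr_eq_mult_inverse_powr)
    also have "weight k * inverse (weight k) powr (1 - 1 / p) * 2 powr (- c * k) \<le> L * weight k"
      using L weight_pos[of k] by (simp add: inverse_weight mult.assoc mult.commute)
    finally show ?thesis .
  qed
  then show ?thesis by (rule that)
qed

lemma lp_dist_curve_le:
  assumes pq: "p < q" and L: "\<And>k. block_mass q k powr (1 / q) \<le> L * weight k"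
    and st: "s \<in> {0..1}" "t \<in> {0..1}"
  shows "lp_dist q (curve s) (curve t) \<le> L * \<bar>s - t\<bar>"
proof -
  define d where "d k = fill k s - fill k t" for k
  have d: "\<bar>d k\<bar> \<le> 1" for k
    unfolding d_def by (rule abs_fill_diff_le_1)
  \<comment> \<open>the \<open>l_q\<close>-norms of the single blocks, an \<open>l_1\<close> sequence\<close>
  define y where "y k = block_mass q k powr (1 / q) * \<bar>d k\<bar>" for k
  have y_nonneg: "0 \<le> y k" for k by (simp add: y_def)
  have y_pow: "\<bar>y k\<bar> powr q = block_mass q k * \<bar>d k\<bar> powr q" for k
    using pq one_less_p block_mass_nonneg[of q k]
    by (simp add: y_def powr_mult powr_powr abs_mult)
  have y_le: "y k \<le> L * \<bar>progress k s - progress k t\<bar>" for k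
  proof -
    have "y k \<le> L * weight k * \<bar>d k\<bar>"
      unfolding y_def using L by (intro mult_right_mono) auto
    then show ?thesis by (simp add: d_def weight_mult_abs_fill_diff[symmetric] mult.assoc)
  qed
  have summable_bound: "summable (\<lambda>k. L * \<bar>progress k s - progress k t\<bar>)"
    using sums_abs_progress_diff[OF st] by (intro summable_mult) (simp add: sums_iff)
  have summable_y: "summable y"
    by (rule summable_comparison_test'[OF summable_bound]) (use y_le y_nonneg in simp)
  have "lp_dist q (curve s) (curve t) = lp_norm q y"
    using block_vec_lp(3)[OF less_imp_le[OF pq] d]
    by (simp add: curve_def d_def lp_dist_block_vec lp_norm_def y_pow)
  also have "\<dots> \<le> lp_norm 1 y"
    using lp_embedding(2)[of 1 q y] summable_y y_nonneg pq one_less_p by (simp add: lp_def)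
  also have "\<dots> = (\<Sum>k. y k)"
    using y_nonneg suminf_nonneg[OF summable_y y_nonneg] by (simp add: lp_norm_def)
  also have "\<dots> \<le> (\<Sum>k. L * \<bar>progress k s - progress k t\<bar>)"
    by (intro suminf_le y_le summable_y summable_bound)
  also have "\<dots> = L * \<bar>s - t\<bar>"
    using sums_abs_progress_diff[OF st] by (simp add: sums_iff suminf_mult)
  finally show ?thesis .
qed

lemma lp_H1_curve_finite:
  assumes "p < q"
  shows "lp_H1 q (curve ` {0..1}) < \<infinity>"
proof -
  obtain L where "\<And>k. block_mass q k powr (1 / q) \<le> L * weight k"
    using block_mass_root_le_weight[OF assms] by blast
  then have "lp_H1 q (curve ` {0..1}) \<le> ennreal L"
    using assms by (intro lp_H1_lipschitz_image_le curve_in_lp lp_dist_curve_le) auto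
  then show ?thesis by (simp add: le_less_trans)
qed

end

theorem proposition1p1:
  fixes p :: real
  assumes "1 < p"
  shows "(\<forall>q\<ge>p. lp p \<subseteq> lp q \<and>
            (\<forall>\<Gamma>. lp_rectifiable_curve p \<Gamma> \<longrightarrow> lp_rectifiable_curve q \<Gamma>)) \<and>
         (\<exists>\<Gamma>. lp_curve p \<Gamma> \<and> (\<forall>q>p. lp_H1 q \<Gamma> < \<infinity>) \<and> lp_H1 p \<Gamma> = \<infinity>)"
proof
  have "0 < p" using assms by simp
  then show "\<forall>q\<ge>p. lp p \<subseteq> lp q \<and> (\<forall>\<Gamma>. lp_rectifiable_curve p \<Gamma> \<longrightarrow> lp_rectifiable_curve q \<Gamma>)"
    using lp_embedding(1) lp_rectifiable_curve_mono by blast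
  interpret dyadic_curve p
    using assms by unfold_locales
  show "\<exists>\<Gamma>. lp_curve p \<Gamma> \<and> (\<forall>q>p. lp_H1 q \<Gamma> < \<infinity>) \<and> lp_H1 p \<Gamma> = \<infinity>"
    using lp_curve_image_curve lp_H1_curve_finite lp_H1_curve_infinite by blast
qed

end
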